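(* For every integer $n\geq 0$, \[ b_{n}^{(2)}(x)=\sum_{l=0}^{n}\binom{n}{l}\frac{B_{l}\,b_{n-l}(x)}{l+1}. \]
   Context: For $k\in\mathbb{Z}$, the polylogarithm is $Li_k(x)=\sum_{n=1}^{\infty}\frac{x^n}{n^k}$. The poly-Bernoulli polynomials of the second kind $b_n^{(k)}(x)$ are defined by the generating function \[ \frac{Li_{k}(1-e^{-t})}{\log(1+t)}(1+t)^{x}=\sum_{n=0}^{\infty}b_{n}^{(k)}(x)\frac{t^{n}}{n!}. \] The Bernoulli polynomials of the second kind $b_n(x)$ are defined by $\frac{t}{\log(1+t)}(1+t)^x=\sum_{n=0}^{\infty}b_n(x)\frac{t^n}{n!}$. The Bernoulli numbers $B_n$ are defined by $\frac{t}{e^t-1}=\sum_{n=0}^{\infty}B_n\frac{t^n}{n!}$. *)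

theory Defs
  imports "HOL-Computational_Algebra.Formal_Power_Series"
begin

definition polylog_fps :: "int \<Rightarrow> real fps" where
  "polylog_fps k = Abs_fps (\<lambda>n. if n = 0 then 0 else 1 / (real n powi k))"

text \<open>Generating function Li_k(1 - e^{-t}) / log(1+t) * (1+t)^x as a formal power series in t.
  Here fps_exp c = e^{ct}, fps_ln 1 = log(1+t), fps_binomial x = (1+t)^x.\<close>
definition poly_bernoulli2_gf :: "int \<Rightarrow> real \<Rightarrow> real fps" where
  "poly_bernoulli2_gf k x =
     (fps_compose (polylog_fps k) (1 - fps_exp (-1)) / fps_ln 1) * fps_binomial x"

definition poly_bernoulli2 :: "int \<Rightarrow> nat \<Rightarrow> real \<Rightarrow> real" where
  "poly_bernoulli2 k n x = fact n * fps_nth (poly_bernoulli2_gf k x) n"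

definition bernoulli2 :: "nat \<Rightarrow> real \<Rightarrow> real" where
  "bernoulli2 n x = fact n * fps_nth ((fps_X / fps_ln 1) * fps_binomial x) n"

definition bernoulli_num :: "nat \<Rightarrow> real" where
  "bernoulli_num n = fact n * fps_nth (fps_X / (fps_exp 1 - 1)) n"

end

theory Submission
  imports Defs
begin

unbundle fps_syntax

text \<open>Write \<open>E = 1 - e\<^sup>-\<^sup>t\<close>. Since \<open>Li\<^sub>1(y) = -log(1 - y)\<close>, we have \<open>Li\<^sub>1(E) = t\<close>, and
  \<open>y Li\<^sub>2'(y) = Li\<^sub>1(y)\<close> gives \<open>(Li\<^sub>2(E))' = Li\<^sub>2'(E) E' = t e\<^sup>-\<^sup>t / (1 - e\<^sup>-\<^sup>t) = t / (e\<^sup>t - 1)\<close>.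
  Integrating, \<open>Li\<^sub>2(E) = \<Sum>\<^sub>l B\<^sub>l t\<^sup>l\<^sup>+\<^sup>1 / ((l+1) l!)\<close>, so the generating function of
  \<open>b\<^sub>n\<^sup>(\<^sup>2\<^sup>)(x)\<close> is the product of \<open>\<Sum>\<^sub>l B\<^sub>l/(l+1) t\<^sup>l/l!\<close> and \<open>t/log(1+t) (1+t)\<^sup>x\<close>; comparing
  coefficients of this product of exponential generating functions gives the formula.\<close>

lemma polylog_fps_nth_0 [simp]: "polylog_fps k $ 0 = 0"
  by (simp add: polylog_fps_def)

lemma fps_X_mult_fps_deriv_polylog_fps: "fps_X * fps_deriv (polylog_fps (k + 1)) = polylog_fps k"
proof (rule fps_ext)
  fix n
  show "(fps_X * fps_deriv (polylog_fps (k + 1))) $ n = polylog_fps k $ n"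
  proof (cases n)
    case (Suc m)
    have "real (Suc m) powi (k + 1) = real (Suc m) * real (Suc m) powi k"
      by (simp add: power_int_add)
    then show ?thesis
      using Suc by (simp add: polylog_fps_def fps_X_mult_nth del: of_nat_Suc)
  qed simp
qed

lemma fps_deriv_polylog_fps_1: "fps_deriv (polylog_fps 1) * (1 - fps_X) = 1"
proof -
  have geometric: "fps_deriv (polylog_fps 1) = Abs_fps (\<lambda>_. 1)"
    by (simp add: fps_eq_iff polylog_fps_def del: of_nat_Suc)
  show ?thesis
    unfolding geometric by (auto simp: fps_eq_iff algebra_simps fps_X_mult_right_nth)
qed

lemma fps_deriv_one_minus_fps_exp_neg: "fps_deriv (1 - fps_exp (-1)) = (fps_exp (-1) :: real fps)"
proof -
  have "fps_const (-1::real) = -1"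
    by (metis fps_const_neg fps_const_1_eq_1)
  then show ?thesis
    by simp
qed

lemma polylog_fps_1_compose: "polylog_fps 1 oo (1 - fps_exp (-1)) = fps_X"
proof -
  let ?E = "1 - fps_exp (-1) :: real fps"
  have E0: "?E $ 0 = 0"
    by simp
  have "fps_deriv (polylog_fps 1 oo ?E) = (fps_deriv (polylog_fps 1) oo ?E) * (1 - ?E)"
    unfolding fps_compose_deriv[OF E0] fps_deriv_one_minus_fps_exp_neg by simp
  also have "1 - ?E = (1 - fps_X) oo ?E"
    using E0 by (simp add: fps_compose_sub_distrib)
  also have "(fps_deriv (polylog_fps 1) oo ?E) * ((1 - fps_X) oo ?E) = 1"
    by (simp add: fps_compose_mult_distrib[OF E0, symmetric] fps_deriv_polylog_fps_1)
  finally have "fps_deriv (polylog_fps 1 oo ?E) = fps_deriv fps_X"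
    by simp
  then show ?thesis
    using fps_deriv_eq_iff[of "polylog_fps 1 oo ?E" fps_X] by simp
qed

lemma fps_exp_1_minus_1_nonzero: "fps_exp 1 - 1 \<noteq> (0 :: real fps)"
proof
  assume "fps_exp 1 - 1 = (0 :: real fps)"
  then have "(fps_exp 1 - 1 :: real fps) $ 1 = 0"
    by simp
  then show False
    by simp
qed

lemma fps_deriv_polylog_fps_2_compose:
  "fps_deriv (polylog_fps 2 oo (1 - fps_exp (-1))) = fps_X / (fps_exp 1 - 1)"
proof -
  let ?E = "1 - fps_exp (-1) :: real fps"
  have E0: "?E $ 0 = 0"
    by simp
  have exp_inverse: "fps_exp (-1) * fps_exp 1 = (1 :: real fps)"
    using fps_exp_add_mult[of "-1::real" 1] by simp
  have "fps_deriv (polylog_fps 2 oo ?E) * (fps_exp 1 - 1)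
      = (fps_deriv (polylog_fps 2) oo ?E) * (fps_exp (-1) * (fps_exp 1 - 1))"
    unfolding fps_compose_deriv[OF E0] fps_deriv_one_minus_fps_exp_neg by (simp only: mult.assoc)
  also have "fps_exp (-1) * (fps_exp 1 - 1) = fps_X oo ?E"
    using exp_inverse E0 by (simp add: algebra_simps)
  also have "(fps_deriv (polylog_fps 2) oo ?E) * (fps_X oo ?E)
      = (fps_X * fps_deriv (polylog_fps (1 + 1))) oo ?E"
    by (simp add: fps_compose_mult_distrib[OF E0] mult.commute)
  also have "\<dots> = polylog_fps 1 oo ?E"
    by (simp only: fps_X_mult_fps_deriv_polylog_fps)
  finally have "fps_deriv (polylog_fps 2 oo ?E) * (fps_exp 1 - 1) = fps_X"
    by (simp add: polylog_fps_1_compose)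
  then show ?thesis
    using fps_exp_1_minus_1_nonzero by (metis nonzero_mult_div_cancel_right)
qed

lemma polylog_fps_2_compose:
  "polylog_fps 2 oo (1 - fps_exp (-1))
     = fps_X * Abs_fps (\<lambda>l. bernoulli_num l / (fact l * real (l + 1)))"
proof (rule fps_ext)
  fix n
  show "(polylog_fps 2 oo (1 - fps_exp (-1))) $ n
      = (fps_X * Abs_fps (\<lambda>l. bernoulli_num l / (fact l * real (l + 1)))) $ n"
  proof (cases n)
    case (Suc m)
    have "bernoulli_num m / fact m = real (Suc m) * (polylog_fps 2 oo (1 - fps_exp (-1))) $ Suc m"
      using arg_cong[OF fps_deriv_polylog_fps_2_compose, of "\<lambda>f. f $ m"]
      by (simp add: bernoulli_num_def fps_deriv_nth)
    then show ?thesis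
      using Suc by (simp add: field_simps del: of_nat_Suc)
  qed simp
qed

lemma fps_ln_dvd_fps_X:
  fixes c :: "'a :: field_char_0"
  assumes "c \<noteq> 0"
  shows "fps_ln c dvd fps_X"
proof -
  have "fps_ln c $ 1 \<noteq> 0"
    using assms by (simp add: fps_ln_nth)
  then have "fps_ln c \<noteq> 0" and "subdegree (fps_ln c) \<le> 1"
    by (auto intro: subdegree_leI)
  then show ?thesis
    by (simp add: fps_dvd_iff)
qed

lemma poly_bernoulli2_gf_2:
  "poly_bernoulli2_gf 2 x
     = Abs_fps (\<lambda>l. bernoulli_num l / (fact l * real (l + 1)))
       * ((fps_X / fps_ln 1) * fps_binomial x)"
proof -
  have "fps_X * Q / fps_ln 1 = Q * (fps_X / fps_ln 1)" for Q :: "real fps"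
    using div_mult_swap[OF fps_ln_dvd_fps_X[of "1::real"], of Q] by (simp add: mult.commute)
  then show ?thesis
    unfolding poly_bernoulli2_gf_def polylog_fps_2_compose by (simp only: mult.assoc)
qed

lemma fact_mult_fps_mult_nth:
  fixes f g :: "'a :: field_char_0 fps"
  shows "fact n * (f * g) $ n
     = (\<Sum>l = 0..n. of_nat (n choose l) * (fact l * f $ l) * (fact (n - l) * g $ (n - l)))"
  unfolding fps_mult_nth sum_distrib_left
proof (rule sum.cong[OF refl])
  fix l
  assume "l \<in> {0..n}"
  then have "fact l * fact (n - l) * (n choose l) = fact n"
    by (simp add: binomial_fact_lemma)
  then have "(fact n :: 'a) = of_nat (fact l * fact (n - l) * (n choose l))"
    by (simp only: of_nat_fact)
  also have "\<dots> = of_nat (n choose l) * fact l * fact (n - l)"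
    by (simp only: of_nat_mult of_nat_fact ac_simps)
  finally have "(fact n :: 'a) = of_nat (n choose l) * fact l * fact (n - l)" .
  then show "fact n * (f $ l * g $ (n - l))
      = of_nat (n choose l) * (fact l * f $ l) * (fact (n - l) * g $ (n - l))"
    by (simp only: ac_simps)
qed

theorem theorem1:
  fixes n :: nat and x :: real
  shows "poly_bernoulli2 2 n x =
    (\<Sum>l = 0..n. real (n choose l) * bernoulli_num l * bernoulli2 (n - l) x / real (l + 1))"
  unfolding poly_bernoulli2_def poly_bernoulli2_gf_2
  by (subst fact_mult_fps_mult_nth) (simp add: bernoulli2_def)

end
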